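(* Let $n\ge1$, $K=2n$, and let $x_1,\dots,x_n,y_1,\dots,y_n\in\mathbb{R}$. Define $m_k=\sum_{j=1}^n x_j^k-\sum_{j=1}^n y_j^k$ for $k=1,\dots,K$, and $\tilde m=(0,m_1,\dots,m_K)^T\in\mathbb{R}^{K+1}$. Write $$p(x)=(x-x_1)\cdots(x-x_n)=c_0+c_1x+\dots+c_nx^n,\qquad q(x)=(x-y_1)\cdots(x-y_n)=d_0+d_1x+\dots+d_nx^n$$ (so $c_n=d_n=1$), and set $\mathbf{c}=(c_n,c_{n-1},\dots,c_0,0,\dots,0)^T\in\mathbb{R}^{K+1}$ and $\mathbf{d}=(d_n,d_{n-1},\dots,d_0,0,\dots,0)^T\in\mathbb{R}^{K+1}$ (padded with $n$ zeros). Let $\tilde a,\tilde b\in\mathbb{R}^{K+1}$ be the vectors with first entry $1$ satisfying $\mathcal{T}(\tilde m)\tilde a=\Lambda\tilde a$ and $\mathcal{T}(\tilde m)\tilde b=-\Lambda\tilde b$. Then $$\mathcal{T}(\tilde a)\mathbf{c}=\mathbf{d},\qquad \mathcal{T}(\tilde b)\mathbf{d}=\mathbf{c}.$$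
   Context: For $\mathbf{x}=(x_1,\dots,x_N)^T\in\mathbb{R}^N$, $\mathcal{T}(\mathbf{x})$ denotes the $N\times N$ lower triangular Toeplitz matrix whose first column is $\mathbf{x}$, i.e. $\mathcal{T}(\mathbf{x})_{ij}=x_{i-j+1}$ for $i\ge j$ and $0$ for $i<j$. Here $N=K+1$ and $\Lambda=\mathrm{diag}(0,1,2,\dots,K)$. (The conditions on $\tilde a,\tilde b$ are lower triangular systems that determine them uniquely given first entry $1$.) *)

theory Defs
  imports "Jordan_Normal_Form.Matrix" "HOL-Computational_Algebra.Polynomial"
begin

text \<open>Vectors in R^N are represented as JNF vectors with indices 0..N-1;
  entry i (0-based) corresponds to entry i+1 of the paper.\<close>

definition lower_toeplitz :: "'a::zero vec \<Rightarrow> 'a mat" where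
  "lower_toeplitz v = mat (dim_vec v) (dim_vec v) (\<lambda>(i,j). if j \<le> i then v $ (i - j) else 0)"

definition Lambda_mat :: "nat \<Rightarrow> real mat" where
  "Lambda_mat K = mat (K+1) (K+1) (\<lambda>(i,j). if i = j then real i else 0)"

definition rev_coeff_vec :: "nat \<Rightarrow> nat \<Rightarrow> real poly \<Rightarrow> real vec" where
  "rev_coeff_vec n K p = vec (K+1) (\<lambda>i. if i \<le> n then coeff p (n - i) else 0)"

definition moment_vec :: "nat \<Rightarrow> nat \<Rightarrow> (nat \<Rightarrow> real) \<Rightarrow> (nat \<Rightarrow> real) \<Rightarrow> real vec" where
  "moment_vec n K x y = vec (K+1) (\<lambda>k. if k = 0 then 0
      else (\<Sum>j=1..n. x j ^ k) - (\<Sum>j=1..n. y j ^ k))"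

end

theory Submission
  imports Defs "HOL-Computational_Algebra.Polynomial_FPS"
begin

(* Read a vector v = (v_0,...,v_K) as the power series v_0 + v_1 X + ... + v_K X^K,
   taken modulo X^(K+1).  Then multiplying by the lower triangular Toeplitz matrix T(u) is
   multiplication of series, and Lambda is the Euler operator D = X d/dX.  With
     P_x = prod_j (1 - x_j X)   (the reversed polynomial p, whose coefficients form c),
     S_x = sum_(k>=1) (sum_j x_j^k) X^k   (the power-sum series),
   the hypothesis on a says D A = A (S_x - S_y) mod X^(K+1), and Newton's identity reads
   D P_x = - P_x S_x.  Hence U = A P_x - P_y satisfies D U = - U S_y mod X^(K+1) and U_0 = 0,
   which forces U = 0 mod X^(K+1) by comparing coefficients; this is T(a) c = d.  The claim
   for b is the same statement with x and y exchanged, because the moment vector changes sign. *)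

definition euler :: "'a::comm_ring_1 fps \<Rightarrow> 'a fps" where
  "euler f = fps_X * fps_deriv f"

lemma euler_nth: "fps_nth (euler f) k = of_nat k * fps_nth f k"
  by (simp add: euler_def fps_mult_fps_X_deriv_shift)

lemma euler_mult: "euler (f * g) = euler f * g + f * euler g"
  by (simp add: euler_def algebra_simps)

lemma euler_diff: "euler (f - g) = euler f - euler g"
  by (simp add: euler_def algebra_simps)

definition power_sum_fps :: "('b \<Rightarrow> 'a::comm_ring_1) \<Rightarrow> 'b set \<Rightarrow> 'a fps" where
  "power_sum_fps x J = Abs_fps (\<lambda>k. if k = 0 then 0 else (\<Sum>j\<in>J. x j ^ k))"

definition rev_char_fps :: "('b \<Rightarrow> 'a::comm_ring_1) \<Rightarrow> 'b set \<Rightarrow> 'a fps" where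
  "rev_char_fps x J = (\<Prod>j\<in>J. 1 - fps_const (x j) * fps_X)"

lemma rev_char_fps_nth_0: "finite J \<Longrightarrow> fps_nth (rev_char_fps x J) 0 = 1"
  by (induction J rule: finite_induct) (simp_all add: rev_char_fps_def)

lemma geometric_fps:
  "(1 - fps_const c * fps_X) * Abs_fps (\<lambda>k. if k = 0 then 0 else c ^ k) = fps_const (c::'a::comm_ring_1) * fps_X"
proof (rule fps_ext)
  fix k
  let ?G = "Abs_fps (\<lambda>k. if k = 0 then 0 else c ^ k)"
  have expand: "(1 - fps_const c * fps_X) * ?G = ?G - fps_const c * (fps_X * ?G)"
    by (simp only: left_diff_distrib mult_1_left mult.assoc)
  show "fps_nth ((1 - fps_const c * fps_X) * ?G) k = fps_nth (fps_const c * fps_X) k"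
    unfolding expand by (cases k; cases "k - 1") simp_all
qed

lemma newton_identity:
  assumes "finite J"
  shows "euler (rev_char_fps x J) = - rev_char_fps x J * power_sum_fps x J"
  using assms
proof (induction J rule: finite_induct)
  case empty
  show ?case by (simp add: rev_char_fps_def power_sum_fps_def euler_def fps_eq_iff)
next
  case (insert j J)
  define L where "L = 1 - fps_const (x j) * fps_X"
  define G where "G = Abs_fps (\<lambda>k. if k = 0 then 0 else x j ^ k)"
  have S: "power_sum_fps x (insert j J) = G + power_sum_fps x J"
    using insert by (simp add: power_sum_fps_def G_def fps_eq_iff)
  have P: "rev_char_fps x (insert j J) = L * rev_char_fps x J"
    using insert by (simp add: rev_char_fps_def L_def)
  have DL: "euler L = - (L * G)"
    using geometric_fps[of "x j"] by (simp add: euler_def L_def G_def)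
  show ?case
    unfolding P S euler_mult DL insert.IH by (simp add: algebra_simps)
qed

lemma fps_cutoff_mult_cutoff: "fps_cutoff n (f * fps_cutoff n g) = fps_cutoff n (f * g)"
  by (simp add: fps_cutoff_eq_fps_cutoff_iff fps_cutoff_right_mult_nth)

lemma fps_cutoff_mult_cong:
  assumes "fps_cutoff n f = fps_cutoff n g"
  shows "fps_cutoff n (f * h) = fps_cutoff n (g * h)"
proof -
  have "fps_nth (f * h) k = fps_nth (g * h) k" if "k < n" for k
    using fps_cutoff_left_mult_nth[OF that, of f h] fps_cutoff_left_mult_nth[OF that, of g h]
    by (simp add: assms)
  then show ?thesis by (simp add: fps_cutoff_eq_fps_cutoff_iff)
qed

text \<open>Uniqueness: a series F without constant term solving D F = F S (with S_0 = 0)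
  up to order K vanishes up to order K, since k F_k = sum_(i<k) F_i S_(k-i).\<close>
lemma euler_eq_unique:
  fixes F S :: "'a::field_char_0 fps"
  assumes "fps_nth F 0 = 0" "fps_nth S 0 = 0"
    and "fps_cutoff (Suc K) (euler F) = fps_cutoff (Suc K) (F * S)"
  shows "fps_cutoff (Suc K) F = 0"
proof -
  have "k \<le> K \<longrightarrow> fps_nth F k = 0" for k
  proof (induction k rule: less_induct)
    case (less k)
    show ?case
    proof (intro impI)
      assume "k \<le> K"
      then have "of_nat k * fps_nth F k = fps_nth (F * S) k"
        using assms(3) by (metis euler_nth fps_cutoff_eq_fps_cutoff_iff less_Suc_eq_le)
      also have "\<dots> = (\<Sum>i=0..k. fps_nth F i * fps_nth S (k - i))" by (rule fps_mult_nth)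
      also have "\<dots> = 0"
        using less.IH \<open>k \<le> K\<close> assms(2) by (intro sum.neutral) (force simp: le_less)
      finally have "of_nat k * fps_nth F k = 0" .
      then show "fps_nth F k = 0" using assms(1) by (cases "k = 0") auto
    qed
  qed
  then show ?thesis by (simp add: fps_eq_iff)
qed

lemma euler_eq_transforms_rev_char:
  fixes A :: "'a::field_char_0 fps"
  assumes "finite J" "fps_nth A 0 = 1"
    and "fps_cutoff (Suc K) (euler A) = fps_cutoff (Suc K) (A * (power_sum_fps x J - power_sum_fps y J))"
  shows "fps_cutoff (Suc K) (A * rev_char_fps x J) = fps_cutoff (Suc K) (rev_char_fps y J)"
proof -
  define U where "U = A * rev_char_fps x J - rev_char_fps y J"
  have "euler U = euler A * rev_char_fps x J
      - A * rev_char_fps x J * power_sum_fps x J + rev_char_fps y J * power_sum_fps y J"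
    by (simp add: U_def euler_diff euler_mult newton_identity[OF assms(1)] algebra_simps)
  then have "fps_cutoff (Suc K) (euler U) = fps_cutoff (Suc K)
      (A * (power_sum_fps x J - power_sum_fps y J) * rev_char_fps x J
        - A * rev_char_fps x J * power_sum_fps x J + rev_char_fps y J * power_sum_fps y J)"
    using fps_cutoff_mult_cong[OF assms(3), of "rev_char_fps x J"]
    by (simp add: fps_cutoff_add fps_cutoff_diff)
  also have "\<dots> = fps_cutoff (Suc K) (U * (- power_sum_fps y J))"
    by (simp add: U_def algebra_simps)
  finally have "fps_cutoff (Suc K) U = 0"
    by (rule euler_eq_unique[rotated 2])
      (simp_all add: U_def assms(1,2) rev_char_fps_nth_0 power_sum_fps_def)
  then show ?thesis by (simp add: U_def fps_cutoff_diff)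
qed

definition fps_of_vec :: "'a::zero vec \<Rightarrow> 'a fps" where
  "fps_of_vec v = Abs_fps (\<lambda>k. if k < dim_vec v then v $ k else 0)"

lemma fps_of_vec_nth: "k < dim_vec v \<Longrightarrow> fps_nth (fps_of_vec v) k = v $ k"
  by (simp add: fps_of_vec_def)

lemma fps_of_vec_inject:
  assumes "dim_vec v = dim_vec w" "fps_of_vec v = fps_of_vec w"
  shows "v = w"
proof (rule eq_vecI)
  show "v $ i = w $ i" if "i < dim_vec w" for i
    using that assms fps_of_vec_nth by metis
qed (use assms(1) in simp)

lemma fps_of_vec_lower_toeplitz:
  fixes u w :: "'a::comm_semiring_1 vec"
  assumes "dim_vec w = dim_vec u"
  shows "fps_of_vec (lower_toeplitz u *\<^sub>v w) = fps_cutoff (dim_vec u) (fps_of_vec u * fps_of_vec w)"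
proof (rule fps_ext)
  fix i
  show "fps_nth (fps_of_vec (lower_toeplitz u *\<^sub>v w)) i
      = fps_nth (fps_cutoff (dim_vec u) (fps_of_vec u * fps_of_vec w)) i"
  proof (cases "i < dim_vec u")
    case True
    have "(lower_toeplitz u *\<^sub>v w) $ i = (\<Sum>j<dim_vec u. if j \<le> i then u $ (i - j) * w $ j else 0)"
      using assms True
      by (auto simp: lower_toeplitz_def scalar_prod_def atLeast0LessThan intro!: sum.cong)
    also have "\<dots> = (\<Sum>j\<le>i. u $ (i - j) * w $ j)"
      using True by (simp add: sum.If_cases Int_absorb1 subset_eq flip: atMost_def)
    also have "\<dots> = fps_nth (fps_of_vec u * fps_of_vec w) i"
      unfolding fps_mult_nth fps_of_vec_def using assms True
      by (auto simp: atLeast0AtMost mult.commute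
          intro!: sum.reindex_bij_witness[of _ "\<lambda>j. i - j" "\<lambda>j. i - j"])
    finally show ?thesis using True assms by (simp add: fps_of_vec_nth lower_toeplitz_def)
  qed (use assms in \<open>simp add: fps_of_vec_def lower_toeplitz_def\<close>)
qed

text \<open>T is linear; negation is needed to turn the equation for b into one for a.\<close>
lemma lower_toeplitz_uminus: "lower_toeplitz (- v) = - lower_toeplitz (v :: 'a::ring vec)"
  by (auto simp: lower_toeplitz_def)

lemma fps_of_vec_Lambda_mat:
  assumes "dim_vec a = K + 1"
  shows "fps_of_vec (Lambda_mat K *\<^sub>v a) = fps_cutoff (Suc K) (euler (fps_of_vec a))"
proof (rule fps_ext)
  fix k
  have "(Lambda_mat K *\<^sub>v a) $ k = real k * a $ k" if "k \<le> K"
  proof -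
    have "(Lambda_mat K *\<^sub>v a) $ k = (\<Sum>j\<in>{0..<K+1}. (if k = j then real k else 0) * a $ j)"
      using assms that by (simp add: Lambda_mat_def scalar_prod_def)
    also have "\<dots> = (\<Sum>j\<in>{0..<K+1}. if k = j then real k * a $ j else 0)"
      by (intro sum.cong) auto
    finally show ?thesis using that by simp
  qed
  then show "fps_nth (fps_of_vec (Lambda_mat K *\<^sub>v a)) k
      = fps_nth (fps_cutoff (Suc K) (euler (fps_of_vec a))) k"
    using assms by (simp add: fps_of_vec_def euler_nth Lambda_mat_def)
qed

lemma moment_vec_as_fps:
  "fps_of_vec (moment_vec n K x y)
     = fps_cutoff (Suc K) (power_sum_fps x {1..n} - power_sum_fps y {1..n})"
  by (simp add: fps_eq_iff fps_of_vec_def moment_vec_def power_sum_fps_def)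

lemma moment_vec_swap: "moment_vec n K y x = - moment_vec n K x y"
  by (auto simp: moment_vec_def)

lemma rev_coeff_vec_as_fps:
  "fps_of_vec (rev_coeff_vec n K (\<Prod>j=1..n. [:- x j, 1:])) = fps_cutoff (Suc K) (rev_char_fps x {1..n})"
proof -
  have deg: "degree (\<Prod>j=1..n. [:- x j, 1:]) = n"
    by (subst degree_prod_eq_sum_degree) auto
  have linear: "fps_of_poly (reflect_poly [:- c, 1:]) = 1 - fps_const c * fps_X" for c :: real
    by (simp add: fps_eq_iff coeff_reflect_poly fps_of_poly_nth)
  have "rev_char_fps x {1..n} = fps_of_poly (reflect_poly (\<Prod>j=1..n. [:- x j, 1:]))"
    unfolding rev_char_fps_def reflect_poly_prod fps_of_poly_prod linear ..
  then show ?thesis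
    using deg by (simp add: fps_eq_iff fps_of_vec_def rev_coeff_vec_def fps_of_poly_nth coeff_reflect_poly)
qed

lemma toeplitz_eigenvector_maps_coeffs:
  assumes "dim_vec a = K + 1" "a $ 0 = 1"
    and "lower_toeplitz (moment_vec n K x y) *\<^sub>v a = Lambda_mat K *\<^sub>v a"
  shows "lower_toeplitz a *\<^sub>v rev_coeff_vec n K (\<Prod>j=1..n. [:- x j, 1:])
       = rev_coeff_vec n K (\<Prod>j=1..n. [:- y j, 1:])"
proof (rule fps_of_vec_inject)
  let ?A = "fps_of_vec a" and ?c = "\<lambda>z. rev_coeff_vec n K (\<Prod>j=1..n. [:- z j, 1:])"
  let ?S = "power_sum_fps x {1..n} - power_sum_fps y {1..n}"
  have dim_m: "dim_vec (moment_vec n K x y) = K + 1" by (simp add: moment_vec_def)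
  have dim_c: "dim_vec (?c z) = K + 1" for z by (simp add: rev_coeff_vec_def)
  have "fps_cutoff (Suc K) (euler ?A) = fps_of_vec (lower_toeplitz (moment_vec n K x y) *\<^sub>v a)"
    using assms(1,3) by (simp add: fps_of_vec_Lambda_mat)
  also have "\<dots> = fps_cutoff (Suc K) (?A * ?S)"
    using assms(1) dim_m fps_cutoff_mult_cutoff[of "Suc K" ?A ?S]
    by (simp add: fps_of_vec_lower_toeplitz moment_vec_as_fps mult.commute)
  finally have key: "fps_cutoff (Suc K) (?A * rev_char_fps x {1..n}) = fps_cutoff (Suc K) (rev_char_fps y {1..n})"
    using assms(1,2) by (intro euler_eq_transforms_rev_char) (simp_all add: fps_of_vec_nth)
  have "fps_of_vec (lower_toeplitz a *\<^sub>v ?c x) = fps_cutoff (Suc K) (?A * fps_of_vec (?c x))"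
    using fps_of_vec_lower_toeplitz[of "?c x" a] assms(1) dim_c[of x] by simp
  then show "fps_of_vec (lower_toeplitz a *\<^sub>v ?c x) = fps_of_vec (?c y)"
    unfolding rev_coeff_vec_as_fps fps_cutoff_mult_cutoff by (simp only: key)
qed (simp add: assms(1) lower_toeplitz_def rev_coeff_vec_def)

theorem lemma3:
  fixes n :: nat and x y :: "nat \<Rightarrow> real" and a b :: "real vec"
  assumes "n \<ge> 1"
    and "dim_vec a = 2*n + 1" and "a $ 0 = 1"
    and "lower_toeplitz (moment_vec n (2*n) x y) *\<^sub>v a = Lambda_mat (2*n) *\<^sub>v a"
    and "dim_vec b = 2*n + 1" and "b $ 0 = 1"
    and "lower_toeplitz (moment_vec n (2*n) x y) *\<^sub>v b = - (Lambda_mat (2*n) *\<^sub>v b)"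
  shows "lower_toeplitz a *\<^sub>v (rev_coeff_vec n (2*n) (\<Prod>j=1..n. [:- x j, 1:]))
           = rev_coeff_vec n (2*n) (\<Prod>j=1..n. [:- y j, 1:])
       \<and> lower_toeplitz b *\<^sub>v (rev_coeff_vec n (2*n) (\<Prod>j=1..n. [:- y j, 1:]))
           = rev_coeff_vec n (2*n) (\<Prod>j=1..n. [:- x j, 1:])"
proof
  show "lower_toeplitz a *\<^sub>v (rev_coeff_vec n (2*n) (\<Prod>j=1..n. [:- x j, 1:]))
      = rev_coeff_vec n (2*n) (\<Prod>j=1..n. [:- y j, 1:])"
    using assms(2-4) by (rule toeplitz_eigenvector_maps_coeffs)
  have "lower_toeplitz (moment_vec n (2*n) y x) *\<^sub>v b = Lambda_mat (2*n) *\<^sub>v b"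
  proof -
    have "dim_col (lower_toeplitz (moment_vec n (2*n) x y)) = dim_vec b"
      using assms(5) by (simp add: lower_toeplitz_def moment_vec_def)
    then show ?thesis using assms(7) by (simp add: moment_vec_swap[of n "2*n" x y] lower_toeplitz_uminus)
  qed
  then show "lower_toeplitz b *\<^sub>v (rev_coeff_vec n (2*n) (\<Prod>j=1..n. [:- y j, 1:]))
      = rev_coeff_vec n (2*n) (\<Prod>j=1..n. [:- x j, 1:])"
    using assms(5,6) by (intro toeplitz_eigenvector_maps_coeffs)
qed

end
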